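(* Let $(X,T)$ be a topologically transitive Cantor system and let $0<\theta<1$ be such that $\exp(2\pi i\theta)$ is a continuous eigenvalue of $T$. If $f,g\in C(X,\mathbb Z)$ are such that $f-\theta\mathbf 1$ and $g-\theta\mathbf 1$ are real coboundaries, then $f-g$ is an integer coboundary, i.e. $f-g=h-h\circ T$ for some $h\in C(X,\mathbb Z)$.
   Context: A Cantor system is a homeomorphism $T$ of a compact metric totally disconnected space $X$ without isolated points; topologically transitive means some orbit is dense. A continuous eigenvalue is $\lambda$ with $F\circ T=\lambda F$ for some continuous $F:X\to\mathbb S^1$. A real coboundary is $F-F\circ T$ with $F\in C(X,\mathbb R)$. *)

theory Defs
  imports "HOL-Analysis.Analysis"
begin

definition totally_disconnected_set :: "'a::topological_space set \<Rightarrow> bool" where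
  "totally_disconnected_set X \<longleftrightarrow> (\<forall>C. C \<subseteq> X \<longrightarrow> connected C \<longrightarrow> (\<forall>x\<in>C. \<forall>y\<in>C. x = y))"

definition cantor_system :: "'a::metric_space set \<Rightarrow> ('a \<Rightarrow> 'a) \<Rightarrow> bool" where
  "cantor_system X T \<longleftrightarrow> X \<noteq> {} \<and> compact X \<and> totally_disconnected_set X \<and>
     (\<forall>x\<in>X. x islimpt X) \<and> (\<exists>S. homeomorphism X X T S)"

definition topologically_transitive :: "'a::metric_space set \<Rightarrow> ('a \<Rightarrow> 'a) \<Rightarrow> bool" where
  "topologically_transitive X T \<longleftrightarrow>
     (\<exists>x\<in>X. closure ({(T ^^ n) x | n. True} \<union> {(the_inv_into X T ^^ n) x | n. True}) = X)"

definition continuous_eigenvalue :: "'a::metric_space set \<Rightarrow> ('a \<Rightarrow> 'a) \<Rightarrow> complex \<Rightarrow> bool" where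
  "continuous_eigenvalue X T lam \<longleftrightarrow>
     (\<exists>F :: 'a \<Rightarrow> complex. continuous_on X F \<and> (\<forall>x\<in>X. norm (F x) = 1) \<and>
        (\<forall>x\<in>X. F (T x) = lam * F x))"

definition real_coboundary :: "'a::metric_space set \<Rightarrow> ('a \<Rightarrow> 'a) \<Rightarrow> ('a \<Rightarrow> real) \<Rightarrow> bool" where
  "real_coboundary X T u \<longleftrightarrow>
     (\<exists>F :: 'a \<Rightarrow> real. continuous_on X F \<and> (\<forall>x\<in>X. u x = F x - F (T x)))"

definition int_coboundary :: "'a::metric_space set \<Rightarrow> ('a \<Rightarrow> 'a) \<Rightarrow> ('a \<Rightarrow> int) \<Rightarrow> bool" where
  "int_coboundary X T u \<longleftrightarrow>
     (\<exists>h :: 'a \<Rightarrow> int. continuous_on X h \<and> (\<forall>x\<in>X. u x = h x - h (T x)))"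

end

theory Submission
  imports Defs
begin

text \<open>If \<open>f - \<theta>\<close> and \<open>g - \<theta>\<close> are real coboundaries, so is \<open>f - g = H - H \<circ> T\<close> with \<open>H\<close> continuous
  and real valued. Along the dense orbit of a point \<open>x\<^sub>0\<close>, \<open>H - H x\<^sub>0\<close> changes by the integer values
  of \<open>f - g\<close> only, so it is integer valued there; the set where \<open>H - H x\<^sub>0\<close> is an integer is closed,
  hence it is all of \<open>X\<close>. Thus \<open>H - H x\<^sub>0\<close> is a continuous integer valued transfer function.\<close>

lemma continuous_on_of_int_iff:
  fixes h :: "'a::topological_space \<Rightarrow> int"
  shows "continuous_on X (\<lambda>x. real_of_int (h x)) \<longleftrightarrow> continuous_on X h"
proof
  assume cont: "continuous_on X (\<lambda>x. real_of_int (h x))"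
  \<comment> \<open>rounding is continuous on \<open>\<int>\<close>, since there the floor is only evaluated off \<open>\<int>\<close>\<close>
  have "continuous_on \<int> (\<lambda>t::real. of_int \<lfloor>t + 1/2\<rfloor> :: int)"
  proof (rule continuous_on_compose2[OF continuous_on_of_int_floor])
    show "continuous_on \<int> (\<lambda>t::real. t + 1/2)" by (intro continuous_intros)
    have "t + 1/2 \<notin> \<int>" if "t \<in> \<int>" for t :: real
    proof
      assume "t + 1/2 \<in> \<int>"
      hence "(t + 1/2) - t \<in> \<int>" using that by (rule Ints_diff)
      thus False using Ints_nonzero_abs_less1[of "1/2 :: real"] by simp
    qed
    thus "(\<lambda>t::real. t + 1/2) ` \<int> \<subseteq> UNIV - \<int>" by blast
  qed
  from continuous_on_compose2[OF this cont]
  show "continuous_on X h" by (simp add: image_subset_iff)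
qed (intro continuous_intros)

definition two_sided_orbit :: "'a set \<Rightarrow> ('a \<Rightarrow> 'a) \<Rightarrow> 'a \<Rightarrow> 'a set" where
  "two_sided_orbit X T x = {(T ^^ n) x | n. True} \<union> {(the_inv_into X T ^^ n) x | n. True}"

lemma topologically_transitive_iff_dense_orbit:
  "topologically_transitive X T \<longleftrightarrow> (\<exists>x\<in>X. closure (two_sided_orbit X T x) = X)"
  by (simp add: topologically_transitive_def two_sided_orbit_def)

lemma two_sided_orbit_subset_invariant:
  assumes "x \<in> A" and "\<And>y. y \<in> A \<Longrightarrow> T y \<in> A" and "\<And>y. y \<in> A \<Longrightarrow> the_inv_into X T y \<in> A"
  shows "two_sided_orbit X T x \<subseteq> A"
proof -
  have "(T ^^ n) x \<in> A" for n by (induction n) (simp_all add: assms)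
  moreover have "(the_inv_into X T ^^ n) x \<in> A" for n by (induction n) (simp_all add: assms)
  ultimately show ?thesis unfolding two_sided_orbit_def by blast
qed

lemma homeomorphism_the_inv_into:
  assumes "homeomorphism X X T S" and "y \<in> X"
  shows "the_inv_into X T y = S y"
proof (rule the_inv_into_f_eq)
  show "inj_on T X" using homeomorphism_apply1[OF assms(1)] by (rule inj_on_inverseI)
  show "T (S y) = y" by (rule homeomorphism_apply2[OF assms])
  show "S y \<in> X" using homeomorphism_image2[OF assms(1)] assms(2) by blast
qed

lemma real_coboundary_diff:
  assumes "real_coboundary X T u" and "real_coboundary X T v"
  shows "real_coboundary X T (\<lambda>x. u x - v x)"
proof -
  obtain F G where "continuous_on X F" "continuous_on X G"
    and "\<forall>x\<in>X. u x = F x - F (T x)" "\<forall>x\<in>X. v x = G x - G (T x)"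
    using assms unfolding real_coboundary_def by blast
  hence "continuous_on X (\<lambda>x. F x - G x) \<and>
      (\<forall>x\<in>X. u x - v x = (F x - G x) - (F (T x) - G (T x)))"
    by (simp add: continuous_on_diff)
  thus ?thesis unfolding real_coboundary_def by blast
qed

lemma transfer_function_integral_differences:
  fixes H :: "'a::metric_space \<Rightarrow> real"
  assumes "closed X" and hom: "homeomorphism X X T S"
    and dense: "closure (two_sided_orbit X T x0) = X"
    and "continuous_on X H" and int_cob: "\<And>x. x \<in> X \<Longrightarrow> H x - H (T x) \<in> \<int>"
    and "z \<in> X"
  shows "H z - H x0 \<in> \<int>"
proof -
  define A where "A = X \<inter> (\<lambda>x. H x - H x0) -` \<int>"
  have "closed A"
    unfolding A_def using continuous_on_diff[OF \<open>continuous_on X H\<close> continuous_on_const] \<open>closed X\<close>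
    by (rule continuous_closed_preimage) simp
  have "x0 \<in> two_sided_orbit X T x0"
    unfolding two_sided_orbit_def by (rule UnI1, rule CollectI, rule exI[of _ 0]) simp
  hence "x0 \<in> X" using closure_subset dense by (metis subsetD)
  have "two_sided_orbit X T x0 \<subseteq> A"
  proof (rule two_sided_orbit_subset_invariant)
    show "x0 \<in> A" using \<open>x0 \<in> X\<close> by (simp add: A_def)
    fix y assume "y \<in> A"
    hence "y \<in> X" and int: "H y - H x0 \<in> \<int>" by (auto simp: A_def)
    have "T y \<in> X" and "S y \<in> X" and "T (S y) = y"
      using \<open>y \<in> X\<close> homeomorphism_image1[OF hom] homeomorphism_image2[OF hom]
        homeomorphism_apply2[OF hom] by blast+
    have "H (T y) - H x0 = (H y - H x0) - (H y - H (T y))" by simp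
    also have "\<dots> \<in> \<int>" using int int_cob[OF \<open>y \<in> X\<close>] by (rule Ints_diff)
    finally show "T y \<in> A" using \<open>T y \<in> X\<close> by (simp add: A_def)
    have "H (S y) - H x0 = (H y - H x0) + (H (S y) - H (T (S y)))" using \<open>T (S y) = y\<close> by simp
    also have "\<dots> \<in> \<int>" using int int_cob[OF \<open>S y \<in> X\<close>] by (rule Ints_add)
    finally show "the_inv_into X T y \<in> A"
      using \<open>S y \<in> X\<close> homeomorphism_the_inv_into[OF hom \<open>y \<in> X\<close>] by (simp add: A_def)
  qed
  hence "X \<subseteq> A" using closure_minimal[OF _ \<open>closed A\<close>] dense by blast
  thus ?thesis using \<open>z \<in> X\<close> by (simp add: A_def subset_iff)
qed

lemma int_coboundary_if_real_coboundary:
  fixes u :: "'a::metric_space \<Rightarrow> int"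
  assumes "closed X" and hom: "homeomorphism X X T S" and "topologically_transitive X T"
    and "real_coboundary X T (\<lambda>x. real_of_int (u x))"
  shows "int_coboundary X T u"
proof -
  obtain H where "continuous_on X H"
    and H_cob: "\<And>x. x \<in> X \<Longrightarrow> real_of_int (u x) = H x - H (T x)"
    using assms(4) unfolding real_coboundary_def by blast
  obtain x0 where dense: "closure (two_sided_orbit X T x0) = X"
    using assms(3) unfolding topologically_transitive_iff_dense_orbit by blast
  have int_cob: "H x - H (T x) \<in> \<int>" if "x \<in> X" for x
    unfolding H_cob[OF that, symmetric] by (rule Ints_of_int)
  define h where "h x = \<lfloor>H x - H x0\<rfloor>" for x
  have h_eq: "real_of_int (h x) = H x - H x0" if "x \<in> X" for x
    using transfer_function_integral_differences[OF \<open>closed X\<close> hom dense \<open>continuous_on X H\<close> int_cob that]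
    unfolding h_def by (auto elim: Ints_cases)
  have "continuous_on X (\<lambda>x. real_of_int (h x))"
    using continuous_on_diff[OF \<open>continuous_on X H\<close> continuous_on_const]
    by (rule continuous_on_eq) (simp add: h_eq)
  hence "continuous_on X h" by (simp add: continuous_on_of_int_iff)
  moreover have "u x = h x - h (T x)" if "x \<in> X" for x
  proof -
    have "T x \<in> X" using that homeomorphism_image1[OF hom] by blast
    thus ?thesis using H_cob[OF that] h_eq[OF that] h_eq[OF \<open>T x \<in> X\<close>] by linarith
  qed
  ultimately show ?thesis unfolding int_coboundary_def by blast
qed

theorem mainTheorem8:
  fixes X :: "'a::metric_space set" and T :: "'a \<Rightarrow> 'a" and \<theta> :: real
    and f g :: "'a \<Rightarrow> int"
  assumes "cantor_system X T" and "topologically_transitive X T"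
    and "0 < \<theta>" and "\<theta> < 1"
    and "continuous_eigenvalue X T (exp (2 * pi * \<i> * complex_of_real \<theta>))"
    and "continuous_on X f" and "continuous_on X g"
    and "real_coboundary X T (\<lambda>x. real_of_int (f x) - \<theta>)"
    and "real_coboundary X T (\<lambda>x. real_of_int (g x) - \<theta>)"
  shows "int_coboundary X T (\<lambda>x. f x - g x)"
proof -
  obtain S where hom: "homeomorphism X X T S" and "compact X"
    using assms(1) unfolding cantor_system_def by blast
  have "real_coboundary X T (\<lambda>x. real_of_int (f x - g x))"
    using real_coboundary_diff[OF assms(8,9)] by simp
  with compact_imp_closed[OF \<open>compact X\<close>] hom assms(2)
  show ?thesis by (rule int_coboundary_if_real_coboundary)
qed

end
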